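(* Let $N \ge 1$ and let $\rho_1, \rho_2$ be $N \times N$ density matrices (positive semidefinite complex matrices with unit trace). Then $$1 - G(\rho_1,\rho_2) \le D_{\mathrm{tr}}(\rho_1,\rho_2),$$ where $D_{\mathrm{tr}}(\rho_1,\rho_2) = \frac{1}{2}\mathrm{tr}|\rho_1-\rho_2|$ and $G(\rho_1,\rho_2) = \mathrm{tr}\,\rho_1\rho_2 + \sqrt{1-\mathrm{tr}\,\rho_1^2}\,\sqrt{1-\mathrm{tr}\,\rho_2^2}$. Equivalently, $$\frac{1}{2}\mathrm{tr}|\rho_1-\rho_2| + \mathrm{tr}\,\rho_1\rho_2 + \sqrt{1-\mathrm{tr}\,\rho_1^2}\,\sqrt{1-\mathrm{tr}\,\rho_2^2} \ge 1.$$
   Context: For a Hermitian matrix $A$, $|A| = \sqrt{A^2}$, so $\mathrm{tr}|A|$ is the sum of the absolute values of the eigenvalues of $A$. $D_{\mathrm{tr}}$ is called the trace distance and $G$ the superfidelity. *)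

theory Defs
  imports "Jordan_Normal_Form.Schur_Decomposition" "Jordan_Normal_Form.Char_Poly"
    "HOL-Computational_Algebra.Polynomial"
begin

definition mtrace :: "complex mat \<Rightarrow> complex" where
  "mtrace A = (\<Sum>i<dim_row A. A $$ (i, i))"

definition hermitian_mat :: "complex mat \<Rightarrow> bool" where
  "hermitian_mat A \<longleftrightarrow> square_mat A \<and> mat_adjoint A = A"

definition psd_mat :: "complex mat \<Rightarrow> bool" where
  "psd_mat A \<longleftrightarrow> hermitian_mat A \<and>
     (\<forall>v \<in> carrier_vec (dim_row A). 0 \<le> Re ((A *\<^sub>v v) \<bullet>c v))"

definition density_matrix :: "nat \<Rightarrow> complex mat \<Rightarrow> bool" where
  "density_matrix n \<rho> \<longleftrightarrow> \<rho> \<in> carrier_mat n n \<and> psd_mat \<rho> \<and> mtrace \<rho> = 1"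

text \<open>tr|A| for Hermitian A: sum of absolute values of the eigenvalues (with multiplicity),
  i.e. of the roots of the characteristic polynomial.\<close>
definition trace_abs :: "complex mat \<Rightarrow> real" where
  "trace_abs A = sum_mset (image_mset cmod (proots (char_poly A)))"

definition trace_dist :: "complex mat \<Rightarrow> complex mat \<Rightarrow> real" where
  "trace_dist \<rho>1 \<rho>2 = trace_abs (\<rho>1 - \<rho>2) / 2"

definition superfidelity :: "complex mat \<Rightarrow> complex mat \<Rightarrow> real" where
  "superfidelity \<rho>1 \<rho>2 = Re (mtrace (\<rho>1 * \<rho>2))
     + sqrt (1 - Re (mtrace (\<rho>1 * \<rho>1))) * sqrt (1 - Re (mtrace (\<rho>2 * \<rho>2)))"

end

theory Submission
  imports Defs
begin

text \<open>A Hermitian matrix is unitarily diagonalisable (its Schur form is Hermitian and triangular,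
  hence diagonal). In an eigenbasis of \<open>\<Delta> = \<rho>\<^sub>1 - \<rho>\<^sub>2\<close> with eigenvalues \<open>\<lambda>\<^sub>i\<close>, for every density
  matrix \<open>\<sigma>\<close> one has \<open>tr \<Delta>\<sigma> = \<Sum> \<lambda>\<^sub>i \<sigma>\<^sub>i\<^sub>i\<close> with weights \<open>0 \<le> \<sigma>\<^sub>i\<^sub>i \<le> 1\<close>; as \<open>\<Sum> \<lambda>\<^sub>i = tr \<Delta> = 0\<close>,
  this gives \<open>|tr \<Delta>\<sigma>| \<le> \<Sum> |\<lambda>\<^sub>i| / 2 = D\<^sub>t\<^sub>r\<close>. Taking \<open>\<sigma> = \<rho>\<^sub>1, \<rho>\<^sub>2\<close> bounds
  \<open>tr \<rho>\<^sub>1\<^sup>2 - tr \<rho>\<^sub>1\<rho>\<^sub>2\<close> and \<open>tr \<rho>\<^sub>2\<^sup>2 - tr \<rho>\<^sub>1\<rho>\<^sub>2\<close> by \<open>D\<^sub>t\<^sub>r\<close>, and since the purities are at most 1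
  the product \<open>\<surd>(1 - tr \<rho>\<^sub>1\<^sup>2) \<surd>(1 - tr \<rho>\<^sub>2\<^sup>2)\<close> is at least the smaller of its two radicands.\<close>

section \<open>Adjoints and unitary matrices\<close>

lemma dim_row_mat_adjoint [simp]: "dim_row (mat_adjoint A) = dim_col A"
  and dim_col_mat_adjoint [simp]: "dim_col (mat_adjoint A) = dim_row A"
  unfolding mat_adjoint_def by auto

lemma mat_adjoint_carrier_mat [simp]: "A \<in> carrier_mat n m \<Longrightarrow> mat_adjoint A \<in> carrier_mat m n"
  unfolding carrier_mat_def by auto

lemma index_mat_adjoint [simp]:
  "i < dim_col A \<Longrightarrow> j < dim_row A \<Longrightarrow> mat_adjoint A $$ (i, j) = conjugate (A $$ (j, i))"
  unfolding mat_adjoint_def by (simp add: mat_of_rows_index)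

lemma mat_adjoint_adjoint [simp]: "mat_adjoint (mat_adjoint A) = A"
  by (rule eq_matI) auto

lemma mat_adjoint_one [simp]: "mat_adjoint (1\<^sub>m n :: complex mat) = 1\<^sub>m n"
  by (rule eq_matI) auto

lemma mat_adjoint_zero [simp]: "mat_adjoint (0\<^sub>m n m) = 0\<^sub>m m n"
  by (rule eq_matI) auto

lemma mat_adjoint_mult:
  assumes "(A :: complex mat) \<in> carrier_mat n k" "B \<in> carrier_mat k m"
  shows "mat_adjoint (A * B) = mat_adjoint B * mat_adjoint A"
  by (rule eq_matI) (use assms in \<open>auto simp: scalar_prod_def conjugate_dist_mul mult.commute\<close>)

lemma mat_adjoint_four_block_mat:
  assumes "A \<in> carrier_mat n1 m1" "B \<in> carrier_mat n1 m2" "C \<in> carrier_mat n2 m1" "D \<in> carrier_mat n2 m2"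
  shows "mat_adjoint (four_block_mat A B C D) =
    four_block_mat (mat_adjoint A) (mat_adjoint C) (mat_adjoint B) (mat_adjoint D)"
  by (rule eq_matI) (use assms in auto)

definition unitary_mat :: "nat \<Rightarrow> complex mat \<Rightarrow> bool" where
  "unitary_mat n U \<longleftrightarrow> U \<in> carrier_mat n n \<and> mat_adjoint U * U = 1\<^sub>m n"

lemma unitary_mat_carrier: "unitary_mat n U \<Longrightarrow> U \<in> carrier_mat n n"
  and unitary_mat_adjoint_mult: "unitary_mat n U \<Longrightarrow> mat_adjoint U * U = 1\<^sub>m n"
  unfolding unitary_mat_def by auto

lemma unitary_mat_mult_adjoint: "unitary_mat n U \<Longrightarrow> U * mat_adjoint U = 1\<^sub>m n"
  unfolding unitary_mat_def by (auto intro: mat_mult_left_right_inverse)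

lemma unitary_mat_mult:
  assumes U: "unitary_mat n U" and V: "unitary_mat n V"
  shows "unitary_mat n (U * V)"
proof -
  have [simp]: "U \<in> carrier_mat n n" "V \<in> carrier_mat n n"
    using U V by (auto dest: unitary_mat_carrier)
  have "mat_adjoint (U * V) * (U * V) = mat_adjoint V * (mat_adjoint U * U) * V"
    by (simp add: mat_adjoint_mult[of U n n V n] assoc_mult_mat[of _ n n _ n _ n] mult_carrier_mat[of _ n n _ n])
  also have "\<dots> = 1\<^sub>m n"
    using U V by (simp add: unitary_mat_adjoint_mult right_mult_one_mat[of _ n n])
  finally show ?thesis
    by (simp add: unitary_mat_def mult_carrier_mat[of U n n V n])
qed

lemma unitary_mat_four_block_one:
  assumes "unitary_mat n U"
  shows "unitary_mat (Suc n) (four_block_mat (1\<^sub>m 1) (0\<^sub>m 1 n) (0\<^sub>m n 1) U)"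
proof -
  have U: "U \<in> carrier_mat n n" and UU: "mat_adjoint U * U = 1\<^sub>m n"
    using assms by (auto simp: unitary_mat_def)
  have "four_block_mat (1\<^sub>m 1) (0\<^sub>m 1 n) (0\<^sub>m n 1) U \<in> carrier_mat (1 + n) (1 + n)"
    using U by (intro four_block_carrier_mat) auto
  then show ?thesis
    unfolding unitary_mat_def
    using U UU by (simp add: mat_adjoint_four_block_mat[of _ 1 1 _ n _ n] mult_four_block_mat[of _ 1 1 _ n _ n _ _ 1 _ n])
qed

lemma cscalar_prod_smult:
  assumes "v \<in> carrier_vec n" "w \<in> carrier_vec n"
  shows "(a \<cdot>\<^sub>v v) \<bullet>c (b \<cdot>\<^sub>v w) = a * cnj b * (v \<bullet>c (w :: complex vec))"
  using assms by (auto simp: scalar_prod_def sum_distrib_left intro!: sum.cong)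

definition normalize_vec :: "complex vec \<Rightarrow> complex vec" where
  "normalize_vec v = complex_of_real (1 / sqrt (Re (v \<bullet>c v))) \<cdot>\<^sub>v v"

lemma normalize_vec_carrier [simp]: "v \<in> carrier_vec n \<Longrightarrow> normalize_vec v \<in> carrier_vec n"
  unfolding normalize_vec_def by simp

lemma cscalar_prod_normalize_vec:
  assumes "v \<in> carrier_vec n" "w \<in> carrier_vec n"
  shows "normalize_vec v \<bullet>c normalize_vec w =
    complex_of_real (1 / sqrt (Re (v \<bullet>c v)) / sqrt (Re (w \<bullet>c w))) * (v \<bullet>c w)"
  unfolding normalize_vec_def by (simp add: cscalar_prod_smult[OF assms])

lemma normalize_vec_unit:
  assumes "v \<in> carrier_vec n" "v \<noteq> 0\<^sub>v n"
  shows "normalize_vec v \<bullet>c normalize_vec v = 1"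
proof -
  define s where "s = Re (v \<bullet>c v)"
  have "v \<bullet>c v > 0" using assms by simp
  then have vv: "v \<bullet>c v = complex_of_real s" and s: "s > 0"
    by (auto simp: s_def less_complex_def complex_eq_iff)
  have "normalize_vec v \<bullet>c normalize_vec v = complex_of_real (1 / (sqrt s * sqrt s) * s)"
    unfolding cscalar_prod_normalize_vec[OF assms(1) assms(1)] vv by (simp add: s_def)
  then show ?thesis
    using s by simp
qed

lemma index_mat_adjoint_mult:
  assumes "dim_row B = dim_row A" "i < dim_col A" "j < dim_col B"
  shows "(mat_adjoint A * B) $$ (i, j) = col B j \<bullet>c col A i"
  using assms by (auto simp: scalar_prod_def mult.commute intro!: sum.cong)

lemma unitary_mat_of_normalized_cols:
  assumes ws: "set ws \<subseteq> carrier_vec n" and orth: "corthogonal ws" and len: "length ws = n"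
  shows "unitary_mat n (mat_of_cols n (map normalize_vec ws))" (is "unitary_mat n ?W")
proof -
  have ws_i: "ws ! i \<in> carrier_vec n" if "i < n" for i
    using ws len that by auto
  have col_W: "col ?W i = normalize_vec (ws ! i)" if "i < n" for i
    using that len ws_i by simp
  have "mat_adjoint ?W * ?W = 1\<^sub>m n"
  proof (rule eq_matI)
    fix i j assume "i < dim_row (1\<^sub>m n :: complex mat)" "j < dim_col (1\<^sub>m n :: complex mat)"
    then have i: "i < n" and j: "j < n" by auto
    have "(mat_adjoint ?W * ?W) $$ (i, j) = col ?W j \<bullet>c col ?W i"
      by (rule index_mat_adjoint_mult) (use i j len in auto)
    also have "\<dots> = normalize_vec (ws ! j) \<bullet>c normalize_vec (ws ! i)"
      using i j by (simp add: col_W)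
    also have "\<dots> = 1\<^sub>m n $$ (i, j)"
    proof (cases "i = j")
      case True
      then have "ws ! i \<noteq> 0\<^sub>v n"
        using corthogonalD[OF orth, of i i] len i by auto
      then show ?thesis
        using True i normalize_vec_unit[OF ws_i[OF i]] by simp
    next
      case False
      then have "ws ! j \<bullet>c ws ! i = 0"
        using corthogonalD[OF orth, of j i] len i j by auto
      then show ?thesis
        using False i j by (simp add: cscalar_prod_normalize_vec[OF ws_i[OF j] ws_i[OF i]])
    qed
    finally show "(mat_adjoint ?W * ?W) $$ (i, j) = 1\<^sub>m n $$ (i, j)" .
  qed (use len in auto)
  then show ?thesis
    using mat_of_cols_carrier(1)[of n "map normalize_vec ws"] len by (simp add: unitary_mat_def)
qed

lemma unit_vec_extends_to_unitary_mat:
  assumes v: "v \<in> carrier_vec n" and v1: "v \<bullet>c v = 1"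
  obtains W where "unitary_mat n W" "col W 0 = v"
proof -
  interpret cof_vec_space n "TYPE(complex)" .
  have v0: "v \<noteq> 0\<^sub>v n"
    using v1 v by auto
  then have n: "n > 0"
    using v by (cases n) auto
  define b where "b = basis_completion v"
  from basis_completion[OF v v0, folded b_def]
  have b: "set b \<subseteq> carrier_vec n" "distinct b" "\<not> lin_dep (set b)" "hd b = v" "length b = n"
    by auto
  then obtain vs where b_v: "b = v # vs"
    using n by (cases b) auto
  define ws where "ws = gram_schmidt n b"
  from gram_schmidt_result[OF b(1-3) ws_def]
  have ws: "set ws \<subseteq> carrier_vec n" "corthogonal ws" "length ws = n"
    using b(5) by auto
  have "ws ! 0 = v"
    using gram_schmidt_hd[OF v, of vs] ws(3) n unfolding ws_def b_v by (cases "gram_schmidt n (v # vs)") auto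
  moreover have "normalize_vec v = v"
    using v1 by (simp add: normalize_vec_def)
  ultimately have "col (mat_of_cols n (map normalize_vec ws)) 0 = v"
    using ws n by (subst col_mat_of_cols) auto
  with unitary_mat_of_normalized_cols[OF ws] show ?thesis
    using that by blast
qed

section \<open>Unitary Schur decomposition\<close>

lemma unitary_mat_conj_eigenvector_col:
  assumes A: "A \<in> carrier_mat n n" and W: "unitary_mat n W" and W_v: "col W 0 = v"
    and Av: "A *\<^sub>v v = e \<cdot>\<^sub>v v" and i: "i < n"
  shows "(mat_adjoint W * A * W) $$ (i, 0) = (if i = 0 then e else 0)"
proof -
  have W_c: "W \<in> carrier_mat n n" and WW: "mat_adjoint W * W = 1\<^sub>m n"
    using W by (auto simp: unitary_mat_def)
  have n: "0 < n" using i by simp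
  have "col (A * W) 0 = e \<cdot>\<^sub>v col W 0"
    using col_mult2[OF A W_c n] by (simp only: W_v Av)
  then have "(mat_adjoint W * A * W) $$ (i, 0) = e * (mat_adjoint W * W) $$ (i, 0)"
    using A W_c n i by (simp add: assoc_mult_mat[of _ n n _ n _ n])
  then show ?thesis
    using WW i n by simp
qed

lemma unitary_mat_deflation:
  assumes A: "A \<in> carrier_mat (Suc n) (Suc n)"
  obtains W e where "unitary_mat (Suc n) W"
    "\<And>i. i < Suc n \<Longrightarrow> (mat_adjoint W * A * W) $$ (i, 0) = (if i = 0 then e else 0)"
proof -
  obtain es where cp: "char_poly A = (\<Prod>a\<leftarrow>es. [:- a, 1:])" and len: "length es = Suc n"
    using char_poly_factorized[OF A] by blast
  then obtain e es' where "es = e # es'"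
    by (cases es) auto
  then have "poly (char_poly A) e = 0"
    unfolding cp by simp
  then obtain v0 where "eigenvector A v0 e"
    using eigenvalue_root_char_poly[OF A] unfolding eigenvalue_def by blast
  then have v0: "v0 \<in> carrier_vec (Suc n)" "v0 \<noteq> 0\<^sub>v (Suc n)" "A *\<^sub>v v0 = e \<cdot>\<^sub>v v0"
    using A unfolding eigenvector_def by auto
  define v where "v = normalize_vec v0"
  have v: "v \<in> carrier_vec (Suc n)" "v \<bullet>c v = 1"
    unfolding v_def using v0 normalize_vec_unit by auto
  have Av: "A *\<^sub>v v = e \<cdot>\<^sub>v v"
    unfolding v_def normalize_vec_def using v0 A by (simp add: mult_mat_vec smult_smult_assoc mult.commute)
  obtain W where "unitary_mat (Suc n) W" "col W 0 = v"
    using unit_vec_extends_to_unitary_mat[OF v] .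
  with unitary_mat_conj_eigenvector_col[OF A _ _ Av] show ?thesis
    using that by blast
qed

lemma four_block_mat_first_col:
  assumes B: "B \<in> carrier_mat (Suc n) (Suc n)"
    and col0: "\<And>i. i < Suc n \<Longrightarrow> B $$ (i, 0) = (if i = 0 then e else 0)"
  shows "B = four_block_mat (mat 1 1 (\<lambda>_. e)) (mat 1 n (\<lambda>(_, j). B $$ (0, Suc j)))
    (0\<^sub>m n 1) (mat n n (\<lambda>(i, j). B $$ (Suc i, Suc j)))"
  by (rule eq_matI) (use B col0 in \<open>auto simp: less_Suc_eq_0_disj\<close>)

lemma mat_adjoint_mult_conj:
  assumes "(W :: complex mat) \<in> carrier_mat n n" "E \<in> carrier_mat n n" "A \<in> carrier_mat n n"
  shows "mat_adjoint (W * E) * A * (W * E) = mat_adjoint E * (mat_adjoint W * A * W) * E"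
  using assms by (simp add: mat_adjoint_mult[of W n n E n] assoc_mult_mat[of _ n n _ n _ n]
      mult_carrier_mat[of _ n n _ n])

lemma four_block_mat_one_conj:
  assumes "(a :: complex mat) \<in> carrier_mat 1 1" "b \<in> carrier_mat 1 n" "D \<in> carrier_mat n n" "U \<in> carrier_mat n n"
  defines "E \<equiv> four_block_mat (1\<^sub>m 1) (0\<^sub>m 1 n) (0\<^sub>m n 1) U"
  shows "mat_adjoint E * four_block_mat a b (0\<^sub>m n 1) D * E =
    four_block_mat a (b * U) (0\<^sub>m n 1) (mat_adjoint U * D * U)"
  using assms
  by (simp add: mat_adjoint_four_block_mat[of _ 1 1 _ n _ n] mult_four_block_mat[of _ 1 1 _ n _ n _ _ 1 _ n]
      mult_carrier_mat[of _ n n _ n] mult_carrier_mat[of _ 1 n _ n])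

theorem unitary_schur_decomposition:
  assumes "A \<in> carrier_mat n n"
  shows "\<exists>U. unitary_mat n U \<and> upper_triangular (mat_adjoint U * A * U)"
  using assms
proof (induction n arbitrary: A)
  case 0
  then show ?case
    by (intro exI[of _ "1\<^sub>m 0"]) (auto simp: unitary_mat_def upper_triangular_def)
next
  case (Suc n)
  obtain W e where W: "unitary_mat (Suc n) W"
    and col0: "\<And>i. i < Suc n \<Longrightarrow> (mat_adjoint W * A * W) $$ (i, 0) = (if i = 0 then e else 0)"
    using unitary_mat_deflation[OF Suc.prems] by blast
  have W_c: "W \<in> carrier_mat (Suc n) (Suc n)"
    using W by (rule unitary_mat_carrier)
  define b where "b = mat 1 n (\<lambda>(_, j). (mat_adjoint W * A * W) $$ (0, Suc j))"
  define D where "D = mat n n (\<lambda>(i, j). (mat_adjoint W * A * W) $$ (Suc i, Suc j))"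
  have D: "D \<in> carrier_mat n n" unfolding D_def by simp
  have blocks: "mat_adjoint W * A * W = four_block_mat (mat 1 1 (\<lambda>_. e)) b (0\<^sub>m n 1) D"
    unfolding b_def D_def using W_c Suc.prems col0 by (intro four_block_mat_first_col) auto
  obtain U where U: "unitary_mat n U" and ut: "upper_triangular (mat_adjoint U * D * U)"
    using Suc.IH[OF D] by blast
  define E where "E = four_block_mat (1\<^sub>m 1) (0\<^sub>m 1 n) (0\<^sub>m n 1) U"
  have E: "unitary_mat (Suc n) E"
    unfolding E_def using U by (rule unitary_mat_four_block_one)
  have "mat_adjoint (W * E) * A * (W * E) = mat_adjoint E * (mat_adjoint W * A * W) * E"
    using W_c unitary_mat_carrier[OF E] Suc.prems by (rule mat_adjoint_mult_conj)
  also have "\<dots> = four_block_mat (mat 1 1 (\<lambda>_. e)) (b * U) (0\<^sub>m n 1) (mat_adjoint U * D * U)"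
    unfolding blocks E_def using D unitary_mat_carrier[OF U]
    by (intro four_block_mat_one_conj) (auto simp: b_def)
  finally have "upper_triangular (mat_adjoint (W * E) * A * (W * E))"
    using ut D unitary_mat_carrier[OF U]
    by (auto intro!: upper_triangular_four_block simp: upper_triangular_def)
  then show ?case
    using unitary_mat_mult[OF W E] by blast
qed

section \<open>Traces and Hermitian matrices\<close>

lemma mtrace_mult_comm:
  assumes "A \<in> carrier_mat n m" "B \<in> carrier_mat m n"
  shows "mtrace (A * B) = mtrace (B * A)"
proof -
  have "mtrace (A * B) = (\<Sum>i<n. \<Sum>k<m. A $$ (i, k) * B $$ (k, i))"
    unfolding mtrace_def using assms by (auto simp: scalar_prod_def lessThan_atLeast0 intro!: sum.cong)
  also have "\<dots> = (\<Sum>k<m. \<Sum>i<n. B $$ (k, i) * A $$ (i, k))"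
    by (subst sum.swap) (simp add: mult.commute)
  also have "\<dots> = mtrace (B * A)"
    unfolding mtrace_def using assms by (auto simp: scalar_prod_def lessThan_atLeast0 intro!: sum.cong)
  finally show ?thesis .
qed

lemma mtrace_minus:
  assumes "A \<in> carrier_mat n n" "B \<in> carrier_mat n n"
  shows "mtrace (A - B) = mtrace A - mtrace B"
  unfolding mtrace_def using assms by (simp add: sum_subtractf)

lemma unitary_mat_conj_cancel:
  assumes U: "unitary_mat n U" and A: "A \<in> carrier_mat n n"
  shows "U * (mat_adjoint U * A * U) * mat_adjoint U = A"
proof -
  have U_c: "U \<in> carrier_mat n n" using U by (rule unitary_mat_carrier)
  have "U * (mat_adjoint U * A * U) * mat_adjoint U = (U * mat_adjoint U) * A * (U * mat_adjoint U)"
    using U_c A by (simp add: assoc_mult_mat[of _ n n _ n _ n] mult_carrier_mat[of _ n n _ n])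
  then show ?thesis
    using A by (simp add: unitary_mat_mult_adjoint[OF U])
qed

lemma unitary_mat_conj_mult:
  assumes U: "unitary_mat n U" and A: "A \<in> carrier_mat n n" and B: "B \<in> carrier_mat n n"
  shows "mat_adjoint U * (A * B) * U = (mat_adjoint U * A * U) * (mat_adjoint U * B * U)"
proof -
  have U_c: "U \<in> carrier_mat n n" using U by (rule unitary_mat_carrier)
  have "(mat_adjoint U * A * U) * (mat_adjoint U * B * U) = mat_adjoint U * A * (U * mat_adjoint U) * B * U"
    using U_c A B by (simp add: assoc_mult_mat[of _ n n _ n _ n] mult_carrier_mat[of _ n n _ n])
  then show ?thesis
    using U_c A B by (simp add: unitary_mat_mult_adjoint[OF U] assoc_mult_mat[of _ n n _ n _ n])
qed

lemma mtrace_unitary_mat_conj: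
  assumes U: "unitary_mat n U" and A: "A \<in> carrier_mat n n"
  shows "mtrace (mat_adjoint U * A * U) = mtrace A"
proof -
  have U_c: "U \<in> carrier_mat n n" using U by (rule unitary_mat_carrier)
  have "mtrace (mat_adjoint U * A * U) = mtrace (mat_adjoint U * (A * U))"
    using U_c A by (simp add: assoc_mult_mat[of _ n n _ n _ n])
  also have "\<dots> = mtrace (A * U * mat_adjoint U)"
    using U_c A by (intro mtrace_mult_comm[of _ n n]) auto
  also have "\<dots> = mtrace A"
    using U_c A by (simp add: assoc_mult_mat[of _ n n _ n _ n] unitary_mat_mult_adjoint[OF U])
  finally show ?thesis .
qed

lemma unitary_mat_conj_diag:
  assumes "U \<in> carrier_mat n n" "A \<in> carrier_mat n n" "i < n"
  shows "(mat_adjoint U * A * U) $$ (i, i) = (A *\<^sub>v col U i) \<bullet>c col U i"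
  using assms by (auto simp: scalar_prod_def assoc_mult_mat[of _ n n _ n _ n] sum_distrib_left
      mult.commute mult.left_commute intro!: sum.cong)

lemma psd_mat_unitary_mat_conj_diag_nonneg:
  assumes "psd_mat A" "A \<in> carrier_mat n n" "U \<in> carrier_mat n n" "i < n"
  shows "0 \<le> Re ((mat_adjoint U * A * U) $$ (i, i))"
  using assms unfolding unitary_mat_conj_diag[OF assms(3,2,4)] psd_mat_def by simp

lemma hermitian_mat_unitary_mat_conj:
  assumes H: "hermitian_mat H" "H \<in> carrier_mat n n" and U: "U \<in> carrier_mat n n"
  shows "hermitian_mat (mat_adjoint U * H * U)"
proof -
  have "mat_adjoint (mat_adjoint U * H * U) = mat_adjoint U * mat_adjoint H * U"
    using H U by (simp add: mat_adjoint_mult[of _ n n _ n] mult_carrier_mat[of _ n n _ n] assoc_mult_mat[of _ n n _ n _ n])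
  then show ?thesis
    using H U by (auto simp: hermitian_mat_def)
qed

lemma hermitian_mat_minus:
  assumes "hermitian_mat A" "hermitian_mat B" "A \<in> carrier_mat n n" "B \<in> carrier_mat n n"
  shows "hermitian_mat (A - B)"
proof -
  have "mat_adjoint (A - B) = mat_adjoint A - mat_adjoint B"
    by (rule eq_matI) (use assms in auto)
  then show ?thesis
    using assms by (simp add: hermitian_mat_def)
qed

definition real_diagonal_mat :: "nat \<Rightarrow> (nat \<Rightarrow> real) \<Rightarrow> complex mat" where
  "real_diagonal_mat n d = mat n n (\<lambda>(i, j). if i = j then complex_of_real (d i) else 0)"

lemma hermitian_upper_triangular_real_diagonal:
  assumes T: "T \<in> carrier_mat n n" and herm: "hermitian_mat T" and ut: "upper_triangular T"
  shows "T = real_diagonal_mat n (\<lambda>i. Re (T $$ (i, i)))"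
proof (rule eq_matI)
  fix i j assume "i < dim_row (real_diagonal_mat n (\<lambda>i. Re (T $$ (i, i))))"
    "j < dim_col (real_diagonal_mat n (\<lambda>i. Re (T $$ (i, i))))"
  then have i: "i < n" and j: "j < n"
    by (auto simp: real_diagonal_mat_def)
  have conj: "T $$ (k, l) = cnj (T $$ (l, k))" if "k < n" "l < n" for k l
    using arg_cong[of _ _ "\<lambda>M. M $$ (k, l)", OF herm[unfolded hermitian_mat_def, THEN conjunct2]] T that
    by simp
  have "T $$ (i, j) = 0" if "i \<noteq> j"
    using that ut T i j conj[OF i j] by (cases "j < i") (auto simp: upper_triangular_def)
  moreover have "T $$ (i, i) = complex_of_real (Re (T $$ (i, i)))"
    using conj[OF i i] by (simp add: complex_eq_iff)
  ultimately show "T $$ (i, j) = real_diagonal_mat n (\<lambda>i. Re (T $$ (i, i))) $$ (i, j)"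
    using i j by (auto simp: real_diagonal_mat_def)
qed (use T in \<open>auto simp: real_diagonal_mat_def\<close>)

theorem hermitian_unitary_diagonalization:
  assumes H: "H \<in> carrier_mat n n" and herm: "hermitian_mat H"
  obtains U d where "unitary_mat n U" "mat_adjoint U * H * U = real_diagonal_mat n d"
proof -
  obtain U where U: "unitary_mat n U" and ut: "upper_triangular (mat_adjoint U * H * U)"
    using unitary_schur_decomposition[OF H] by blast
  have U_c: "U \<in> carrier_mat n n" using U by (rule unitary_mat_carrier)
  have "hermitian_mat (mat_adjoint U * H * U)"
    using herm H U_c by (rule hermitian_mat_unitary_mat_conj)
  with ut H U_c that[OF U] show ?thesis
    by (metis hermitian_upper_triangular_real_diagonal mat_adjoint_carrier_mat mult_carrier_mat)
qed

lemma proots_prod_linear: "proots (\<Prod>a\<leftarrow>as. [:- a, 1:]) = mset (as :: complex list)"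
proof (induction as)
  case (Cons a as)
  have "(\<Prod>a\<leftarrow>as. [:- a, 1:]) \<noteq> 0"
    by (auto simp: prod_list_zero_iff)
  then have "proots ([:- a, 1:] * (\<Prod>a\<leftarrow>as. [:- a, 1:])) = proots [:- a, 1:] + proots (\<Prod>a\<leftarrow>as. [:- a, 1:])"
    by (intro proots_mult) auto
  then show ?case
    using Cons by (simp add: proots_linear_factor)
qed simp

lemma trace_abs_real_diagonal_conj:
  assumes U: "unitary_mat n U" and H: "H \<in> carrier_mat n n"
    and diag: "mat_adjoint U * H * U = real_diagonal_mat n d"
  shows "trace_abs H = (\<Sum>i<n. \<bar>d i\<bar>)"
proof -
  have U_c: "U \<in> carrier_mat n n" using U by (rule unitary_mat_carrier)
  have D: "real_diagonal_mat n d \<in> carrier_mat n n"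
    by (simp add: real_diagonal_mat_def)
  have "similar_mat H (real_diagonal_mat n d)"
    using H D U_c unitary_mat_adjoint_mult[OF U] unitary_mat_mult_adjoint[OF U]
      unitary_mat_conj_cancel[OF U H, unfolded diag]
    by (intro similar_matI[of _ _ U "mat_adjoint U" n]) auto
  moreover have "upper_triangular (real_diagonal_mat n d)"
    by (simp add: upper_triangular_def real_diagonal_mat_def)
  moreover have "diag_mat (real_diagonal_mat n d) = map (\<lambda>i. complex_of_real (d i)) [0..<n]"
    by (simp add: diag_mat_def real_diagonal_mat_def)
  ultimately have "char_poly H = (\<Prod>a\<leftarrow>map (\<lambda>i. complex_of_real (d i)) [0..<n]. [:- a, 1:])"
    using D by (metis char_poly_similar char_poly_upper_triangular)
  then have "proots (char_poly H) = mset (map (\<lambda>i. complex_of_real (d i)) [0..<n])"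
    by (simp only: proots_prod_linear)
  then show ?thesis
    unfolding trace_abs_def
    by (simp add: multiset.map_comp o_def sum_unfold_sum_mset lessThan_atLeast0)
qed

lemma mtrace_mult_real_diagonal_conj:
  assumes U: "unitary_mat n U" and H: "H \<in> carrier_mat n n" and B: "B \<in> carrier_mat n n"
    and diag: "mat_adjoint U * H * U = real_diagonal_mat n d"
  shows "mtrace (H * B) = (\<Sum>i<n. complex_of_real (d i) * (mat_adjoint U * B * U) $$ (i, i))"
proof -
  have U_c: "U \<in> carrier_mat n n" using U by (rule unitary_mat_carrier)
  have "mtrace (H * B) = mtrace (real_diagonal_mat n d * (mat_adjoint U * B * U))"
    using U H B by (simp add: mtrace_unitary_mat_conj unitary_mat_conj_mult[symmetric] diag[symmetric])
  also have "\<dots> = (\<Sum>i<n. complex_of_real (d i) * (mat_adjoint U * B * U) $$ (i, i))"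
    unfolding mtrace_def using U_c B
    by (auto simp: real_diagonal_mat_def scalar_prod_def if_distrib[of "\<lambda>x. x * _"] sum.delta
        cong: if_cong intro!: sum.cong)
  finally show ?thesis .
qed

lemma mtrace_real_diagonal_conj:
  assumes U: "unitary_mat n U" and H: "H \<in> carrier_mat n n"
    and diag: "mat_adjoint U * H * U = real_diagonal_mat n d"
  shows "mtrace H = complex_of_real (\<Sum>i<n. d i)"
proof -
  have "mtrace H = mtrace (real_diagonal_mat n d)"
    using mtrace_unitary_mat_conj[OF U H] by (simp add: diag)
  then show ?thesis
    by (simp add: mtrace_def real_diagonal_mat_def)
qed

section \<open>Density matrices\<close>

lemma density_matrix_unitary_mat_conj_diag:
  assumes \<rho>: "density_matrix n \<rho>" and U: "unitary_mat n U" and i: "i < n"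
  shows "0 \<le> Re ((mat_adjoint U * \<rho> * U) $$ (i, i))" "Re ((mat_adjoint U * \<rho> * U) $$ (i, i)) \<le> 1"
proof -
  define r where "r j = Re ((mat_adjoint U * \<rho> * U) $$ (j, j))" for j
  have \<rho>_c: "\<rho> \<in> carrier_mat n n" and U_c: "U \<in> carrier_mat n n"
    using \<rho> U by (auto simp: density_matrix_def unitary_mat_carrier)
  have r_nonneg: "0 \<le> r j" if "j < n" for j
    unfolding r_def using \<rho> \<rho>_c U_c that unfolding density_matrix_def
    by (blast intro: psd_mat_unitary_mat_conj_diag_nonneg)
  have "mtrace (mat_adjoint U * \<rho> * U) = 1"
    using \<rho> \<rho>_c by (simp add: mtrace_unitary_mat_conj[OF U] density_matrix_def)
  then have "(\<Sum>j<n. r j) = 1"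
    using U_c \<rho>_c unfolding mtrace_def r_def by (simp flip: Re_sum)
  moreover have "r i \<le> (\<Sum>j<n. r j)"
    by (rule member_le_sum) (use i r_nonneg in auto)
  ultimately show "0 \<le> Re ((mat_adjoint U * \<rho> * U) $$ (i, i))" "Re ((mat_adjoint U * \<rho> * U) $$ (i, i)) \<le> 1"
    using r_nonneg[OF i] by (simp_all add: r_def)
qed

lemma sum_mult_unit_interval_le_half_sum_abs:
  fixes d r :: "nat \<Rightarrow> real"
  assumes d: "(\<Sum>i<n. d i) = 0" and r: "\<And>i. i < n \<Longrightarrow> 0 \<le> r i \<and> r i \<le> 1"
  shows "\<bar>\<Sum>i<n. d i * r i\<bar> \<le> (\<Sum>i<n. \<bar>d i\<bar>) / 2"
proof -
  have "(\<Sum>i<n. d i * r i) \<le> (\<Sum>i<n. (\<bar>d i\<bar> + d i) / 2)"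
    using r by (intro sum_mono) (auto simp: abs_if mult_left_le mult_nonpos_nonneg)
  moreover have "(\<Sum>i<n. (d i - \<bar>d i\<bar>) / 2) \<le> (\<Sum>i<n. d i * r i)"
    using r by (intro sum_mono) (auto simp: abs_if mult_left_le_one_le)
  ultimately show ?thesis
    using d by (simp add: sum.distrib sum_subtractf flip: sum_divide_distrib)
qed

lemma traceless_hermitian_density_trace_bound:
  assumes H: "H \<in> carrier_mat n n" "hermitian_mat H" "mtrace H = 0" and \<rho>: "density_matrix n \<rho>"
  shows "\<bar>Re (mtrace (H * \<rho>))\<bar> \<le> trace_abs H / 2"
proof -
  obtain U d where U: "unitary_mat n U" and diag: "mat_adjoint U * H * U = real_diagonal_mat n d"
    using hermitian_unitary_diagonalization[OF H(1,2)] .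
  have \<rho>_c: "\<rho> \<in> carrier_mat n n" using \<rho> by (simp add: density_matrix_def)
  define r where "r i = Re ((mat_adjoint U * \<rho> * U) $$ (i, i))" for i
  have "(\<Sum>i<n. d i) = 0"
    using mtrace_real_diagonal_conj[OF U H(1) diag] H(3) by (simp del: of_real_sum)
  moreover have "\<And>i. i < n \<Longrightarrow> 0 \<le> r i \<and> r i \<le> 1"
    using density_matrix_unitary_mat_conj_diag[OF \<rho> U] unfolding r_def by blast
  ultimately have "\<bar>\<Sum>i<n. d i * r i\<bar> \<le> (\<Sum>i<n. \<bar>d i\<bar>) / 2"
    by (rule sum_mult_unit_interval_le_half_sum_abs)
  moreover have "Re (mtrace (H * \<rho>)) = (\<Sum>i<n. d i * r i)"
    using mtrace_mult_real_diagonal_conj[OF U H(1) \<rho>_c diag] by (simp add: r_def Re_sum)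
  ultimately show ?thesis
    by (simp add: trace_abs_real_diagonal_conj[OF U H(1) diag])
qed

lemma density_matrix_purity_le_one:
  assumes \<rho>: "density_matrix n \<rho>"
  shows "Re (mtrace (\<rho> * \<rho>)) \<le> 1"
proof -
  have \<rho>_c: "\<rho> \<in> carrier_mat n n" and herm: "hermitian_mat \<rho>"
    using \<rho> by (auto simp: density_matrix_def psd_mat_def)
  obtain U d where U: "unitary_mat n U" and diag: "mat_adjoint U * \<rho> * U = real_diagonal_mat n d"
    using hermitian_unitary_diagonalization[OF \<rho>_c herm] .
  have d: "Re ((mat_adjoint U * \<rho> * U) $$ (i, i)) = d i" if "i < n" for i
    using that by (simp add: diag real_diagonal_mat_def)
  have d_unit: "0 \<le> d i \<and> d i \<le> 1" if "i < n" for i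
    using density_matrix_unitary_mat_conj_diag[OF \<rho> U that] d[OF that] by simp
  have d_sum: "(\<Sum>i<n. d i) = 1"
    using mtrace_real_diagonal_conj[OF U \<rho>_c diag] \<rho> by (simp add: density_matrix_def del: of_real_sum)
  have "Re (mtrace (\<rho> * \<rho>)) = (\<Sum>i<n. d i * d i)"
    using mtrace_mult_real_diagonal_conj[OF U \<rho>_c \<rho>_c diag] by (simp add: diag real_diagonal_mat_def Re_sum)
  also have "\<dots> \<le> (\<Sum>i<n. d i)"
    using d_unit by (intro sum_mono) (simp add: mult_left_le)
  finally show ?thesis
    using d_sum by simp
qed

lemma trace_dist_ge_trace_diff_mult:
  assumes \<rho>1: "density_matrix n \<rho>1" and \<rho>2: "density_matrix n \<rho>2" and \<sigma>: "density_matrix n \<sigma>"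
  shows "\<bar>Re (mtrace ((\<rho>1 - \<rho>2) * \<sigma>))\<bar> \<le> trace_dist \<rho>1 \<rho>2"
proof -
  have c: "\<rho>1 \<in> carrier_mat n n" "\<rho>2 \<in> carrier_mat n n"
    and h: "hermitian_mat \<rho>1" "hermitian_mat \<rho>2" and tr: "mtrace \<rho>1 = 1" "mtrace \<rho>2 = 1"
    using \<rho>1 \<rho>2 by (auto simp: density_matrix_def psd_mat_def)
  have "\<rho>1 - \<rho>2 \<in> carrier_mat n n" "hermitian_mat (\<rho>1 - \<rho>2)" "mtrace (\<rho>1 - \<rho>2) = 0"
    using c h tr by (auto simp: hermitian_mat_minus mtrace_minus)
  then show ?thesis
    unfolding trace_dist_def using \<sigma> by (rule traceless_hermitian_density_trace_bound)
qed

lemma min_le_sqrt_mult_sqrt: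
  fixes x y :: real
  assumes "0 \<le> x" "0 \<le> y"
  shows "min x y \<le> sqrt x * sqrt y"
proof -
  have "min x y = sqrt (min x y) * sqrt (min x y)"
    using assms by simp
  also have "\<dots> \<le> sqrt x * sqrt y"
    using assms by (intro mult_mono) auto
  finally show ?thesis .
qed

theorem theorem1:
  fixes N :: nat and \<rho>1 \<rho>2 :: "complex mat"
  assumes "N \<ge> 1"
    and "density_matrix N \<rho>1"
    and "density_matrix N \<rho>2"
  shows "1 - superfidelity \<rho>1 \<rho>2 \<le> trace_dist \<rho>1 \<rho>2"
proof -
  note \<rho>1 = assms(2) and \<rho>2 = assms(3)
  have c: "\<rho>1 \<in> carrier_mat N N" "\<rho>2 \<in> carrier_mat N N"
    using \<rho>1 \<rho>2 by (auto simp: density_matrix_def)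
  define a b t where "a = Re (mtrace (\<rho>1 * \<rho>1))" and "b = Re (mtrace (\<rho>2 * \<rho>2))"
    and "t = Re (mtrace (\<rho>1 * \<rho>2))"
  have "Re (mtrace ((\<rho>1 - \<rho>2) * \<rho>1)) = a - t"
    using c mtrace_mult_comm[of \<rho>2 N N \<rho>1]
    by (simp add: a_def t_def minus_mult_distrib_mat[of _ N N] mtrace_minus[of _ N])
  moreover have "Re (mtrace ((\<rho>1 - \<rho>2) * \<rho>2)) = t - b"
    using c by (simp add: b_def t_def minus_mult_distrib_mat[of _ N N] mtrace_minus[of _ N])
  ultimately have "a - t \<le> trace_dist \<rho>1 \<rho>2" "b - t \<le> trace_dist \<rho>1 \<rho>2"
    using trace_dist_ge_trace_diff_mult[OF \<rho>1 \<rho>2 \<rho>1] trace_dist_ge_trace_diff_mult[OF \<rho>1 \<rho>2 \<rho>2]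
    by auto
  moreover have "min (1 - a) (1 - b) \<le> sqrt (1 - a) * sqrt (1 - b)"
    using density_matrix_purity_le_one[OF \<rho>1] density_matrix_purity_le_one[OF \<rho>2]
    by (intro min_le_sqrt_mult_sqrt) (auto simp: a_def b_def)
  ultimately show ?thesis
    unfolding superfidelity_def a_def[symmetric] b_def[symmetric] t_def[symmetric] by linarith
qed

end
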